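(* For all integers $d\ge 2$ and $n\ge 1$, the lattice $\Gamma(M_{d,n})$, ordered pointwise ($f\le g$ iff $f(x)\le g(x)$ for all $x\in M_{d,n}$), is distributive if and only if $n\in\{1,2\}$.
   Context: For integers $d\ge 2$, $n\ge 1$, the $(d,n)$-book lattice $M_{d,n}$ is the finite lattice with universe $\{0,1\}\cup\{a_i: 1\le i\le n\}\cup\{b_j:1\le j\le d-2\}$ and order generated by $0<a_i<b_1<b_2<\cdots<b_{d-2}<1$ for each $1\le i\le n$ (the $a_i$ are pairwise incomparable; when $d=2$ there are no $b_j$ and $0<a_i<1$). For a finite lattice $L$, the geometric realization $\Gamma(L)$ is the set of functions $f\colon L\to[0,1]$ such that for every $s\in[0,1]$ the level set $f_s=\{x\in L: f(x)\ge s\}$ is a principal ideal of $L$, topologized as a subspace of $[0,1]^L$. Equivalently, writing $\phi_a$ for the indicator function of the principal ideal $\{x: x\le a\}$, $\Gamma(L)$ consists of the convex combinations $\sum_{a\in C}u_a\phi_a$ over chains $C$ of $L$. The pointwise order on $\Gamma(L)$ is a lattice order, and $\Gamma(L)$ is regarded as a lattice with the induced meet and join. The maps $h_s\colon\Gamma(L)\to L$, $h_s(f)=\bigvee f_s$ ($s\in[0,1]$) are known to be lattice homomorphisms jointly realizing $\Gamma(L)$ as a subdirect power of $L$. *)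

theory Defs
  imports Main "HOL.Real"
begin

text \<open>Elements of the book lattice M_{d,n}: Bot = 0, Top = 1, A i = a_i, B j = b_j.\<close>
datatype melem = Bot | Top | A nat | B nat

definition book_carrier :: "nat \<Rightarrow> nat \<Rightarrow> melem set" where
  "book_carrier d n = {Bot, Top} \<union> {A i | i. 1 \<le> i \<and> i \<le> n} \<union> {B j | j. 1 \<le> j \<and> j + 2 \<le> d}"

text \<open>The order of M_{d,n} (on the carrier): 0 < a_i < b_1 < ... < b_{d-2} < 1.
  For d = 2 there are no b_j and a_i < 1.\<close>
fun book_le :: "melem \<Rightarrow> melem \<Rightarrow> bool" where
  "book_le Bot y = True"
| "book_le x Top = True"
| "book_le (A i) (A j) = (i = j)"
| "book_le (A i) (B j) = True"
| "book_le (B i) (B j) = (i \<le> j)"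
| "book_le _ _ = False"

text \<open>Geometric realization of a finite lattice given by carrier L and order le:
  functions L \<rightarrow> [0,1] (extended by 0 outside L) all of whose level sets
  f_s = {x. f x \<ge> s}, s \<in> [0,1], are principal ideals {x \<in> L. x \<le> a}, a \<in> L.\<close>
definition Gamma :: "'a set \<Rightarrow> ('a \<Rightarrow> 'a \<Rightarrow> bool) \<Rightarrow> ('a \<Rightarrow> real) set" where
  "Gamma L le = {f. (\<forall>x. x \<notin> L \<longrightarrow> f x = 0) \<and> (\<forall>x\<in>L. 0 \<le> f x \<and> f x \<le> 1) \<and>
      (\<forall>s\<in>{0..1}. \<exists>a\<in>L. {x\<in>L. s \<le> f x} = {x\<in>L. le x a})}"

definition pw_le :: "('a \<Rightarrow> real) \<Rightarrow> ('a \<Rightarrow> real) \<Rightarrow> bool" where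
  "pw_le f g = (\<forall>x. f x \<le> g x)"

definition is_lub_in :: "('a \<Rightarrow> real) set \<Rightarrow> ('a \<Rightarrow> real) \<Rightarrow> ('a \<Rightarrow> real) \<Rightarrow> ('a \<Rightarrow> real) \<Rightarrow> bool" where
  "is_lub_in P f g j = (j \<in> P \<and> pw_le f j \<and> pw_le g j \<and> (\<forall>k\<in>P. pw_le f k \<and> pw_le g k \<longrightarrow> pw_le j k))"

definition is_glb_in :: "('a \<Rightarrow> real) set \<Rightarrow> ('a \<Rightarrow> real) \<Rightarrow> ('a \<Rightarrow> real) \<Rightarrow> ('a \<Rightarrow> real) \<Rightarrow> bool" where
  "is_glb_in P f g m = (m \<in> P \<and> pw_le m f \<and> pw_le m g \<and> (\<forall>k\<in>P. pw_le k f \<and> pw_le k g \<longrightarrow> pw_le k m))"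

definition distributive_lattice_pw :: "('a \<Rightarrow> real) set \<Rightarrow> bool" where
  "distributive_lattice_pw P =
    ((\<forall>f\<in>P. \<forall>g\<in>P. (\<exists>j. is_lub_in P f g j) \<and> (\<exists>m. is_glb_in P f g m)) \<and>
     (\<forall>f\<in>P. \<forall>g\<in>P. \<forall>h\<in>P. \<forall>j a b c e.
        is_lub_in P g h j \<and> is_glb_in P f j a \<and> is_glb_in P f g b \<and> is_glb_in P f h c \<and>
        is_lub_in P b c e \<longrightarrow> a = e))"

end

theory Submission
  imports Defs
begin

text \<open>
  Meets in \<open>\<Gamma>(L)\<close> are pointwise minima, and the indicators \<open>\<phi>\<^sub>a\<close> of principal ideals
  embed \<open>L\<close> into \<open>\<Gamma>(L)\<close> preserving joins and meets; so \<open>\<Gamma>(L)\<close> can only be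
  distributive if \<open>L\<close> is. For \<open>n \<ge> 3\<close> the elements \<open>0, a\<^sub>1, a\<^sub>2, a\<^sub>3, a\<^sub>1 \<or> a\<^sub>2\<close>
  form a copy of \<open>M\<^sub>3\<close> in \<open>M\<^sub>d\<^sub>,\<^sub>n\<close>.
  For \<open>n \<le> 2\<close> every \<open>f \<in> \<Gamma>(M\<^sub>d\<^sub>,\<^sub>n)\<close> satisfies \<open>f(a\<^sub>1 \<or> a\<^sub>2) = min (f a\<^sub>1) (f a\<^sub>2)\<close>,
  and all other elements are join-prime. Hence the join of \<open>f\<close> and \<open>g\<close> is the pointwise
  maximum with this one value recomputed, and distributivity of \<open>\<Gamma>\<close> reduces to
  distributivity of \<open>min\<close> and \<open>max\<close> on the reals.
\<close>

definition is_join :: "'a set \<Rightarrow> ('a \<Rightarrow> 'a \<Rightarrow> bool) \<Rightarrow> 'a \<Rightarrow> 'a \<Rightarrow> 'a \<Rightarrow> bool" where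
  "is_join L le a b c \<longleftrightarrow> c \<in> L \<and> (\<forall>z\<in>L. le c z \<longleftrightarrow> le a z \<and> le b z)"

definition is_meet :: "'a set \<Rightarrow> ('a \<Rightarrow> 'a \<Rightarrow> bool) \<Rightarrow> 'a \<Rightarrow> 'a \<Rightarrow> 'a \<Rightarrow> bool" where
  "is_meet L le a b c \<longleftrightarrow> c \<in> L \<and> (\<forall>z\<in>L. le z c \<longleftrightarrow> le z a \<and> le z b)"

lemma Gamma_zero_outside: "f \<in> Gamma L le \<Longrightarrow> x \<notin> L \<Longrightarrow> f x = 0"
  by (auto simp: Gamma_def)

lemma Gamma_range: "f \<in> Gamma L le \<Longrightarrow> x \<in> L \<Longrightarrow> 0 \<le> f x \<and> f x \<le> 1"
  by (auto simp: Gamma_def)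

lemma Gamma_nonneg: "f \<in> Gamma L le \<Longrightarrow> 0 \<le> f x"
  by (cases "x \<in> L") (auto simp: Gamma_def)

lemma Gamma_level_set:
  assumes "f \<in> Gamma L le" "0 \<le> s" "s \<le> 1"
  obtains a where "a \<in> L" "\<And>x. x \<in> L \<Longrightarrow> s \<le> f x \<longleftrightarrow> le x a"
  using assms unfolding Gamma_def by (force simp: set_eq_iff)

lemma GammaI:
  assumes "\<And>x. x \<notin> L \<Longrightarrow> f x = 0" "\<And>x. x \<in> L \<Longrightarrow> 0 \<le> f x \<and> f x \<le> 1"
    and "\<And>s. 0 \<le> s \<Longrightarrow> s \<le> 1 \<Longrightarrow> \<exists>a\<in>L. \<forall>x\<in>L. s \<le> f x \<longleftrightarrow> le x a"
  shows "f \<in> Gamma L le"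
  using assms unfolding Gamma_def by (fastforce simp: set_eq_iff)

lemma Gamma_antitone:
  assumes "transp le" and f: "f \<in> Gamma L le" and "x \<in> L" "y \<in> L" "le x y"
  shows "f y \<le> f x"
proof -
  obtain a where "a \<in> L" and a: "\<And>z. z \<in> L \<Longrightarrow> f y \<le> f z \<longleftrightarrow> le z a"
    using Gamma_level_set[OF f] Gamma_range[OF f \<open>y \<in> L\<close>] by metis
  then have "le y a" using \<open>y \<in> L\<close> by blast
  then show ?thesis using a \<open>x \<in> L\<close> \<open>le x y\<close> \<open>transp le\<close> by (meson transpE)
qed

lemma Gamma_at_join:
  assumes "reflp le" "transp le" and f: "f \<in> Gamma L le"
    and "a \<in> L" "b \<in> L" and c: "is_join L le a b c"
  shows "f c = min (f a) (f b)"
proof -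
  have "c \<in> L" "le a c" "le b c" using c \<open>reflp le\<close> by (auto simp: is_join_def reflp_def)
  then have upper: "f c \<le> f a" "f c \<le> f b"
    using Gamma_antitone[OF \<open>transp le\<close> f] \<open>a \<in> L\<close> \<open>b \<in> L\<close> by blast+
  have "0 \<le> min (f a) (f b)" "min (f a) (f b) \<le> 1"
    using Gamma_range[OF f] \<open>a \<in> L\<close> \<open>b \<in> L\<close> by (simp_all add: min.coboundedI1)
  then obtain z where "z \<in> L" and z: "\<And>x. x \<in> L \<Longrightarrow> min (f a) (f b) \<le> f x \<longleftrightarrow> le x z"
    using Gamma_level_set[OF f] by blast
  then have "le a z" "le b z" using z[OF \<open>a \<in> L\<close>] z[OF \<open>b \<in> L\<close>] by simp_all
  then have "le c z" using c \<open>z \<in> L\<close> by (simp add: is_join_def)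
  then have "min (f a) (f b) \<le> f c" using z \<open>c \<in> L\<close> by blast
  with upper show ?thesis by linarith
qed

lemma inf_mem_Gamma:
  assumes meets: "\<And>a b. a \<in> L \<Longrightarrow> b \<in> L \<Longrightarrow> \<exists>c. is_meet L le a b c"
    and f: "f \<in> Gamma L le" and g: "g \<in> Gamma L le"
  shows "inf f g \<in> Gamma L le"
proof (rule GammaI)
  fix s :: real assume s: "0 \<le> s" "s \<le> 1"
  obtain a where "a \<in> L" and a: "\<And>x. x \<in> L \<Longrightarrow> s \<le> f x \<longleftrightarrow> le x a"
    using Gamma_level_set[OF f s] by blast
  obtain b where "b \<in> L" and b: "\<And>x. x \<in> L \<Longrightarrow> s \<le> g x \<longleftrightarrow> le x b"
    using Gamma_level_set[OF g s] by blast
  obtain c where "is_meet L le a b c" using meets \<open>a \<in> L\<close> \<open>b \<in> L\<close> by blast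
  then show "\<exists>c\<in>L. \<forall>x\<in>L. s \<le> inf f g x \<longleftrightarrow> le x c"
    using a b by (auto simp: is_meet_def)
qed (use Gamma_zero_outside[OF f] Gamma_zero_outside[OF g] Gamma_range[OF f] Gamma_range[OF g]
    in \<open>auto simp: le_infI1\<close>)

lemma is_glb_in_Gamma_inf:
  assumes "\<And>a b. a \<in> L \<Longrightarrow> b \<in> L \<Longrightarrow> \<exists>c. is_meet L le a b c"
    and "f \<in> Gamma L le" "g \<in> Gamma L le"
  shows "is_glb_in (Gamma L le) f g (inf f g)"
  using inf_mem_Gamma[OF assms] by (auto simp: is_glb_in_def pw_le_def)

lemma is_lub_in_unique: "is_lub_in P f g j \<Longrightarrow> is_lub_in P f g j' \<Longrightarrow> j = j'"
  unfolding is_lub_in_def pw_le_def by (intro ext) (meson order_antisym)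

lemma is_glb_in_unique: "is_glb_in P f g m \<Longrightarrow> is_glb_in P f g m' \<Longrightarrow> m = m'"
  unfolding is_glb_in_def pw_le_def by (intro ext) (meson order_antisym)

lemma distributive_lattice_pwI:
  assumes lub: "\<And>f g. f \<in> P \<Longrightarrow> g \<in> P \<Longrightarrow> is_lub_in P f g (join f g)"
    and glb: "\<And>f g. f \<in> P \<Longrightarrow> g \<in> P \<Longrightarrow> is_glb_in P f g (meet f g)"
    and distrib: "\<And>f g h. f \<in> P \<Longrightarrow> g \<in> P \<Longrightarrow> h \<in> P \<Longrightarrow>
      meet f (join g h) = join (meet f g) (meet f h)"
  shows "distributive_lattice_pw P"
  unfolding distributive_lattice_pw_def
proof (intro conjI ballI allI impI)
  fix f g assume "f \<in> P" "g \<in> P"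
  then show "\<exists>j. is_lub_in P f g j" "\<exists>m. is_glb_in P f g m" using lub glb by blast+
next
  fix f g h j a b c e assume P: "f \<in> P" "g \<in> P" "h \<in> P"
  assume "is_lub_in P g h j \<and> is_glb_in P f j a \<and> is_glb_in P f g b \<and> is_glb_in P f h c \<and>
    is_lub_in P b c e"
  then have j: "is_lub_in P g h j" and a: "is_glb_in P f j a" and b: "is_glb_in P f g b"
    and c: "is_glb_in P f h c" and e: "is_lub_in P b c e"
    by simp_all
  have "j = join g h" "b = meet f g" "c = meet f h"
    using is_lub_in_unique[OF j lub[OF P(2,3)]] is_glb_in_unique[OF b glb[OF P(1,2)]]
      is_glb_in_unique[OF c glb[OF P(1,3)]] by simp_all
  moreover have "j \<in> P" "b \<in> P" "c \<in> P" using j b c by (simp_all add: is_lub_in_def is_glb_in_def)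
  ultimately show "a = e"
    using is_glb_in_unique[OF a glb[OF P(1)]] is_lub_in_unique[OF e lub] distrib[OF P] by simp
qed

definition principal_indicator :: "'a set \<Rightarrow> ('a \<Rightarrow> 'a \<Rightarrow> bool) \<Rightarrow> 'a \<Rightarrow> 'a \<Rightarrow> real" where
  "principal_indicator L le a x = (if x \<in> L \<and> le x a then 1 else 0)"

lemma principal_indicator_mem_Gamma:
  assumes "t \<in> L" "\<forall>x\<in>L. le x t" "a \<in> L"
  shows "principal_indicator L le a \<in> Gamma L le"
proof (rule GammaI)
  fix s :: real assume "0 \<le> s" "s \<le> 1"
  show "\<exists>c\<in>L. \<forall>x\<in>L. s \<le> principal_indicator L le a x \<longleftrightarrow> le x c"
  proof (cases "s = 0")
    case True
    then show ?thesis using assms by (auto simp: principal_indicator_def)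
  next
    case False
    then show ?thesis using assms \<open>0 \<le> s\<close> \<open>s \<le> 1\<close> by (auto simp: principal_indicator_def)
  qed
qed (auto simp: principal_indicator_def)

lemma is_lub_in_principal_indicator:
  assumes "reflp le" "transp le" and top: "t \<in> L" "\<forall>x\<in>L. le x t"
    and "a \<in> L" "b \<in> L" and c: "is_join L le a b c"
  shows "is_lub_in (Gamma L le) (principal_indicator L le a) (principal_indicator L le b)
    (principal_indicator L le c)"
  unfolding is_lub_in_def
proof (intro conjI ballI impI)
  have "c \<in> L" "le a c" "le b c" using c \<open>reflp le\<close> by (auto simp: is_join_def reflp_def)
  then show "principal_indicator L le c \<in> Gamma L le"
    and "pw_le (principal_indicator L le a) (principal_indicator L le c)"
    and "pw_le (principal_indicator L le b) (principal_indicator L le c)"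
    using principal_indicator_mem_Gamma top \<open>transp le\<close>
    by (auto simp: pw_le_def principal_indicator_def dest: transpD)
  fix k assume k: "k \<in> Gamma L le"
    and "pw_le (principal_indicator L le a) k \<and> pw_le (principal_indicator L le b) k"
  then have "principal_indicator L le a a \<le> k a" "principal_indicator L le b b \<le> k b"
    by (auto simp: pw_le_def)
  then have "1 \<le> k a" "1 \<le> k b"
    using \<open>a \<in> L\<close> \<open>b \<in> L\<close> \<open>reflp le\<close> by (auto simp: principal_indicator_def reflp_def)
  obtain z where "z \<in> L" and z: "\<And>x. x \<in> L \<Longrightarrow> 1 \<le> k x \<longleftrightarrow> le x z"
    using Gamma_level_set[OF k, of 1] by auto
  then have "le c z" using c \<open>1 \<le> k a\<close> \<open>1 \<le> k b\<close> \<open>a \<in> L\<close> \<open>b \<in> L\<close>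
    by (auto simp: is_join_def)
  then show "pw_le (principal_indicator L le c) k"
    using z \<open>transp le\<close> Gamma_nonneg[OF k]
    by (auto simp: pw_le_def principal_indicator_def dest: transpD)
qed

lemma principal_indicator_meet:
  assumes "is_meet L le a b c"
  shows "principal_indicator L le c = inf (principal_indicator L le a) (principal_indicator L le b)"
proof
  fix x
  show "principal_indicator L le c x =
    inf (principal_indicator L le a) (principal_indicator L le b) x"
    using assms by (cases "x \<in> L") (simp_all add: is_meet_def principal_indicator_def inf_min)
qed

lemma is_glb_in_principal_indicator:
  assumes top: "t \<in> L" "\<forall>x\<in>L. le x t" and c: "is_meet L le a b c"
  shows "is_glb_in (Gamma L le) (principal_indicator L le a) (principal_indicator L le b)
    (principal_indicator L le c)"
proof -
  have "c \<in> L" using c by (simp add: is_meet_def)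
  then have "inf (principal_indicator L le a) (principal_indicator L le b) \<in> Gamma L le"
    using principal_indicator_mem_Gamma[where le = le, OF top] principal_indicator_meet[OF c]
    by metis
  then show ?thesis unfolding principal_indicator_meet[OF c] is_glb_in_def pw_le_def by simp
qed

lemma principal_indicator_inj:
  assumes "reflp le" "antisymp le" "a \<in> L" "b \<in> L"
    and "principal_indicator L le a = principal_indicator L le b"
  shows "a = b"
proof -
  have "principal_indicator L le a a = principal_indicator L le b a"
    "principal_indicator L le a b = principal_indicator L le b b"
    using assms(5) by simp_all
  then have "le a b" "le b a"
    using assms(1,3,4) by (auto simp: principal_indicator_def reflp_def split: if_splits)
  then show ?thesis using \<open>antisymp le\<close> by (auto dest: antisympD)
qed

lemma distributive_Gamma_imp_distributive:
  assumes D: "distributive_lattice_pw (Gamma L le)"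
    and "reflp le" "transp le" "antisymp le" and top: "t \<in> L" "\<forall>x\<in>L. le x t"
    and "a \<in> L" "b \<in> L" "c \<in> L"
    and j: "is_join L le b c j" and m: "is_meet L le a j m"
    and mb: "is_meet L le a b mb" and mc: "is_meet L le a c mc" and e: "is_join L le mb mc e"
  shows "m = e"
proof -
  let ?\<phi> = "principal_indicator L le"
  have L: "j \<in> L" "m \<in> L" "mb \<in> L" "mc \<in> L" "e \<in> L"
    using j m mb mc e by (auto simp: is_join_def is_meet_def)
  have "?\<phi> a \<in> Gamma L le" "?\<phi> b \<in> Gamma L le" "?\<phi> c \<in> Gamma L le"
    using principal_indicator_mem_Gamma[where le = le, OF top] \<open>a \<in> L\<close> \<open>b \<in> L\<close> \<open>c \<in> L\<close>
    by blast+
  note distrib = D[unfolded distributive_lattice_pw_def, THEN conjunct2, rule_format, OF this]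
  have "is_lub_in (Gamma L le) (?\<phi> b) (?\<phi> c) (?\<phi> j)"
    "is_lub_in (Gamma L le) (?\<phi> mb) (?\<phi> mc) (?\<phi> e)"
    using is_lub_in_principal_indicator[OF \<open>reflp le\<close> \<open>transp le\<close> top] \<open>b \<in> L\<close> \<open>c \<in> L\<close> L j e
    by blast+
  moreover have "is_glb_in (Gamma L le) (?\<phi> a) (?\<phi> j) (?\<phi> m)"
    "is_glb_in (Gamma L le) (?\<phi> a) (?\<phi> b) (?\<phi> mb)"
    "is_glb_in (Gamma L le) (?\<phi> a) (?\<phi> c) (?\<phi> mc)"
    using is_glb_in_principal_indicator[where le = le, OF top] m mb mc by blast+
  ultimately have "?\<phi> m = ?\<phi> e" by (intro distrib) blast
  then show ?thesis by (rule principal_indicator_inj[OF \<open>reflp le\<close> \<open>antisymp le\<close> L(2,5)])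
qed

lemma book_carrier_simps [simp]:
  "Bot \<in> book_carrier d n" "Top \<in> book_carrier d n"
  "A i \<in> book_carrier d n \<longleftrightarrow> 1 \<le> i \<and> i \<le> n"
  "B j \<in> book_carrier d n \<longleftrightarrow> 1 \<le> j \<and> j + 2 \<le> d"
  by (auto simp: book_carrier_def)

lemma book_le_Top [simp]: "book_le x Top"
  by (cases x) auto

lemma reflp_book_le: "reflp book_le"
  by (rule reflpI) (case_tac x; simp)

lemma transp_book_le: "transp book_le"
  by (rule transpI) (case_tac x; case_tac y; case_tac z; auto)

lemma antisymp_book_le: "antisymp book_le"
  by (rule antisympI) (case_tac x; case_tac y; auto)

abbreviation Gamma_book :: "nat \<Rightarrow> nat \<Rightarrow> (melem \<Rightarrow> real) set" where
  "Gamma_book d n \<equiv> Gamma (book_carrier d n) book_le"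

text \<open>The join \<open>a\<^sub>i \<or> a\<^sub>j\<close> (\<open>i \<noteq> j\<close>) of the book lattice.\<close>
definition pages_sup :: "nat \<Rightarrow> melem" where
  "pages_sup d = (if 3 \<le> d then B 1 else Top)"

lemma pages_sup_in_book_carrier [simp]: "pages_sup d \<in> book_carrier d n"
  by (simp add: pages_sup_def)

fun book_sup :: "nat \<Rightarrow> melem \<Rightarrow> melem \<Rightarrow> melem" where
  "book_sup d Bot y = y"
| "book_sup d x Bot = x"
| "book_sup d Top y = Top"
| "book_sup d x Top = Top"
| "book_sup d (A i) (A j) = (if i = j then A i else pages_sup d)"
| "book_sup d (A i) (B j) = B j"
| "book_sup d (B i) (A j) = B i"
| "book_sup d (B i) (B j) = B (max i j)"

fun book_inf :: "melem \<Rightarrow> melem \<Rightarrow> melem" where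
  "book_inf Bot y = Bot"
| "book_inf x Bot = Bot"
| "book_inf Top y = y"
| "book_inf x Top = x"
| "book_inf (A i) (A j) = (if i = j then A i else Bot)"
| "book_inf (A i) (B j) = A i"
| "book_inf (B i) (A j) = A j"
| "book_inf (B i) (B j) = B (min i j)"

lemma book_sup_is_join:
  assumes "x \<in> book_carrier d n" "y \<in> book_carrier d n"
  shows "is_join (book_carrier d n) book_le x y (book_sup d x y)"
  unfolding is_join_def
proof (intro conjI ballI)
  show "book_sup d x y \<in> book_carrier d n"
    using assms by (cases x; cases y) (auto simp: pages_sup_def)
  show "book_le (book_sup d x y) z \<longleftrightarrow> book_le x z \<and> book_le y z" if "z \<in> book_carrier d n" for z
    using assms that by (cases x; cases y; cases z) (auto simp: pages_sup_def)
qed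

lemma book_inf_is_meet:
  assumes "x \<in> book_carrier d n" "y \<in> book_carrier d n"
  shows "is_meet (book_carrier d n) book_le x y (book_inf x y)"
  unfolding is_meet_def
proof (intro conjI ballI)
  show "book_inf x y \<in> book_carrier d n"
    using assms by (cases x; cases y) auto
  show "book_le z (book_inf x y) \<longleftrightarrow> book_le z x \<and> book_le z y" if "z \<in> book_carrier d n" for z
    using assms that by (cases x; cases y; cases z) auto
qed

lemma book_le_sup_iff_disj:
  assumes "n \<le> 2" "x \<in> book_carrier d n" "y \<in> book_carrier d n" "z \<in> book_carrier d n"
    and "z \<noteq> pages_sup d \<or> n < 2"
  shows "book_le z (book_sup d x y) \<longleftrightarrow> book_le z x \<or> book_le z y"
  using assms by (cases x; cases y; cases z) (auto simp: pages_sup_def)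

lemma Gamma_book_at_pages_sup:
  assumes "f \<in> Gamma_book d 2"
  shows "f (pages_sup d) = inf (f (A 1)) (f (A 2))"
  using Gamma_at_join[OF reflp_book_le transp_book_le assms _ _
      book_sup_is_join[of "A 1" d 2 "A 2"]]
  by (simp add: inf_min)

text \<open>The join in \<open>\<Gamma>(M\<^sub>d\<^sub>,\<^sub>n)\<close> for \<open>n \<le> 2\<close>: the pointwise maximum, except at
  \<open>a\<^sub>1 \<or> a\<^sub>2\<close>, where the value is forced by \<open>Gamma_book_at_pages_sup\<close>.\<close>
definition book_Gamma_sup :: "nat \<Rightarrow> nat \<Rightarrow> (melem \<Rightarrow> real) \<Rightarrow> (melem \<Rightarrow> real) \<Rightarrow> melem \<Rightarrow> real" where
  "book_Gamma_sup d n f g =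
    (if n = 2 then (sup f g)(pages_sup d := inf (sup f g (A 1)) (sup f g (A 2))) else sup f g)"

lemma book_Gamma_sup_mem_Gamma:
  assumes "n \<le> 2" and f: "f \<in> Gamma_book d n" and g: "g \<in> Gamma_book d n"
  shows "book_Gamma_sup d n f g \<in> Gamma_book d n"
proof (rule GammaI)
  fix s :: real assume s: "0 \<le> s" "s \<le> 1"
  obtain a where a: "a \<in> book_carrier d n"
    "\<And>x. x \<in> book_carrier d n \<Longrightarrow> s \<le> f x \<longleftrightarrow> book_le x a"
    using Gamma_level_set[OF f s] by blast
  obtain b where b: "b \<in> book_carrier d n"
    "\<And>x. x \<in> book_carrier d n \<Longrightarrow> s \<le> g x \<longleftrightarrow> book_le x b"
    using Gamma_level_set[OF g s] by blast
  let ?c = "book_sup d a b"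
  have "?c \<in> book_carrier d n" using book_sup_is_join[OF a(1) b(1)] by (simp add: is_join_def)
  have prime: "s \<le> sup f g x \<longleftrightarrow> book_le x ?c"
    if "x \<in> book_carrier d n" "x \<noteq> pages_sup d \<or> n < 2" for x
    using book_le_sup_iff_disj[OF \<open>n \<le> 2\<close> a(1) b(1) that] a b that
    by (simp add: sup_max le_max_iff_disj)
  have "s \<le> book_Gamma_sup d n f g x \<longleftrightarrow> book_le x ?c" if "x \<in> book_carrier d n" for x
  proof (cases "n = 2 \<and> x = pages_sup d")
    case True
    then have "book_le (pages_sup d) ?c \<longleftrightarrow> book_le (A 1) ?c \<and> book_le (A 2) ?c"
      using book_sup_is_join[of "A 1" d n "A 2"] \<open>?c \<in> book_carrier d n\<close> by (simp add: is_join_def)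
    moreover have "A 1 \<noteq> pages_sup d" "A 2 \<noteq> pages_sup d" by (simp_all add: pages_sup_def)
    ultimately show ?thesis
      using True prime[of "A 1"] prime[of "A 2"] by (simp add: book_Gamma_sup_def)
  next
    case False
    then show ?thesis using prime that \<open>n \<le> 2\<close> by (auto simp: book_Gamma_sup_def)
  qed
  then show "\<exists>c\<in>book_carrier d n. \<forall>x\<in>book_carrier d n.
      s \<le> book_Gamma_sup d n f g x \<longleftrightarrow> book_le x c"
    using \<open>?c \<in> book_carrier d n\<close> by blast
qed (use Gamma_zero_outside[OF f] Gamma_zero_outside[OF g] Gamma_range[OF f] Gamma_range[OF g]
    in \<open>auto simp: book_Gamma_sup_def le_supI1 le_infI1\<close>)

lemma is_lub_in_book_Gamma_sup:
  assumes "n \<le> 2" "f \<in> Gamma_book d n" "g \<in> Gamma_book d n"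
  shows "is_lub_in (Gamma_book d n) f g (book_Gamma_sup d n f g)"
  unfolding is_lub_in_def pw_le_def
proof (intro conjI allI ballI impI)
  show "book_Gamma_sup d n f g \<in> Gamma_book d n" by (rule book_Gamma_sup_mem_Gamma[OF assms])
  have "f (pages_sup d) = inf (f (A 1)) (f (A 2))" "g (pages_sup d) = inf (g (A 1)) (g (A 2))"
    if "n = 2" using Gamma_book_at_pages_sup assms(2,3) that by blast+
  then show "f x \<le> book_Gamma_sup d n f g x" "g x \<le> book_Gamma_sup d n f g x" for x
    by (auto simp: book_Gamma_sup_def intro: le_infI1 le_infI2 le_supI1 le_supI2)
  fix k x assume k: "k \<in> Gamma_book d n" and "(\<forall>x. f x \<le> k x) \<and> (\<forall>x. g x \<le> k x)"
  then have fg: "sup (f y) (g y) \<le> k y" for y by simp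
  show "book_Gamma_sup d n f g x \<le> k x"
  proof (cases "n = 2 \<and> x = pages_sup d")
    case True
    then have "k x = inf (k (A 1)) (k (A 2))" using Gamma_book_at_pages_sup k by blast
    then show ?thesis
      using True fg[of "A 1"] fg[of "A 2"] by (simp add: book_Gamma_sup_def le_infI1 le_infI2)
  next
    case False
    then show ?thesis using fg by (auto simp: book_Gamma_sup_def)
  qed
qed

lemma book_Gamma_sup_inf_distrib:
  assumes "f \<in> Gamma_book d n"
  shows "inf f (book_Gamma_sup d n g h) = book_Gamma_sup d n (inf f g) (inf f h)"
proof (cases "n = 2")
  case True
  then have "f (pages_sup d) = inf (f (A 1)) (f (A 2))"
    using Gamma_book_at_pages_sup assms by simp
  then show ?thesis
    using True by (simp add: book_Gamma_sup_def fun_eq_iff inf_sup_distrib1[symmetric] inf_aci)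
qed (simp add: book_Gamma_sup_def inf_sup_distrib1)

lemma book_Gamma_distributive:
  assumes "n \<le> 2"
  shows "distributive_lattice_pw (Gamma_book d n)"
proof (rule distributive_lattice_pwI[where join = "book_Gamma_sup d n" and meet = inf])
  have meets: "\<exists>c. is_meet (book_carrier d n) book_le a b c"
    if "a \<in> book_carrier d n" "b \<in> book_carrier d n" for a b
    using book_inf_is_meet[OF that] by blast
  fix f g assume "f \<in> Gamma_book d n" "g \<in> Gamma_book d n"
  then show "is_lub_in (Gamma_book d n) f g (book_Gamma_sup d n f g)"
    and "is_glb_in (Gamma_book d n) f g (inf f g)"
    using is_lub_in_book_Gamma_sup[OF assms] is_glb_in_Gamma_inf[OF meets] by blast+
qed (rule book_Gamma_sup_inf_distrib)

lemma book_Gamma_not_distributive: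
  assumes "3 \<le> n"
  shows "\<not> distributive_lattice_pw (Gamma_book d n)"
proof
  assume D: "distributive_lattice_pw (Gamma_book d n)"
  have A: "A 1 \<in> book_carrier d n" "A 2 \<in> book_carrier d n" "A 3 \<in> book_carrier d n"
    using assms by simp_all
  have j: "is_join (book_carrier d n) book_le (A 2) (A 3) (pages_sup d)"
    using book_sup_is_join[OF A(2,3)] by simp
  have m: "is_meet (book_carrier d n) book_le (A 1) (pages_sup d) (A 1)"
    using book_inf_is_meet[OF A(1) pages_sup_in_book_carrier]
    by (cases "3 \<le> d") (simp_all add: pages_sup_def)
  have mb: "is_meet (book_carrier d n) book_le (A 1) (A 2) Bot"
    and mc: "is_meet (book_carrier d n) book_le (A 1) (A 3) Bot"
    using book_inf_is_meet[OF A(1) A(2)] book_inf_is_meet[OF A(1) A(3)] by simp_all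
  have e: "is_join (book_carrier d n) book_le Bot Bot Bot"
    using book_sup_is_join[of Bot d n Bot] by simp
  \<comment> \<open>\<open>a\<^sub>1 \<and> (a\<^sub>2 \<or> a\<^sub>3) = a\<^sub>1\<close> but \<open>(a\<^sub>1 \<and> a\<^sub>2) \<or> (a\<^sub>1 \<and> a\<^sub>3) = 0\<close>\<close>
  have "A 1 = Bot"
    using distributive_Gamma_imp_distributive[where t = Top,
        OF D reflp_book_le transp_book_le antisymp_book_le _ _ A j m mb mc e]
    by simp
  then show False by simp
qed

theorem mainTheorem4:
  fixes d n :: nat
  assumes "2 \<le> d" and "1 \<le> n"
  shows "distributive_lattice_pw (Gamma (book_carrier d n) book_le) \<longleftrightarrow> n \<in> {1, 2}"
  using book_Gamma_distributive book_Gamma_not_distributive \<open>1 \<le> n\<close>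
  by (cases "n \<le> 2") auto

end
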